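(* Let $(\Omega,\mathcal{A},\mu)$ be a $\sigma$-finite measure space, decomposed as a disjoint union $\Omega=\Omega_d\cup\Omega_a$ with $\Omega_d,\Omega_a\in\mathcal{A}$, where the restriction of $\mu$ to $\Omega_d$ is diffuse and $\Omega_a=\bigcup_{n\in\mathbb{N}}B_n$ is the union of a disjoint sequence $(B_n)_{n\in\mathbb{N}}$ of atoms. Let $u\in L_\infty(\mu)$ and let $M_u$ be the multiplication operator $M_uf:=uf$ on $L_1(\mu)$. Then \[ \|M_u\|_{e}=\max\Bigl\{\|u|_{\Omega_d}\|_\infty,\ \limsup_{n\to\infty}|u(B_n)|\Bigr\}, \] where $\|M_u\|_{e}:=\inf\{\|M_u+K\| : K \text{ a compact operator on } L_1(\mu)\}$.
   Context: A measure restricted to $\Omega_d$ is diffuse if every measurable $A\subseteq\Omega_d$ with $\mu(A)>0$ contains a measurable $A'$ with $0<\mu(A')<\mu(A)$. A measurable set $B$ is an atom if every measurable subset $B'\subseteq B$ satisfies $\mu(B')\in\{0,\mu(B)\}$. For each $n$, $u(B_n)$ denotes the a.e.-constant value of $u$ on $B_n$; if $\mu(B_n)=0$, the convention $u(B_n):=0$ is used. $\|u|_{\Omega_d}\|_\infty$ is the $L_\infty$-norm of the restriction of $u$ to $\Omega_d$. *)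

theory Defs
  imports "HOL-Probability.Probability"
begin

definition L1norm :: "'a measure \<Rightarrow> ('a \<Rightarrow> real) \<Rightarrow> real" where
  "L1norm M f = integral\<^sup>L M (\<lambda>x. \<bar>f x\<bar>)"

text \<open>Bounded linear operators on L_1(M), acting on representatives and
  respecting equality almost everywhere.\<close>
definition L1_operator :: "'a measure \<Rightarrow> (('a \<Rightarrow> real) \<Rightarrow> ('a \<Rightarrow> real)) \<Rightarrow> bool" where
  "L1_operator M T \<longleftrightarrow>
     (\<forall>f. integrable M f \<longrightarrow> integrable M (T f)) \<and>
     (\<forall>f g. integrable M f \<longrightarrow> integrable M g \<longrightarrow> (AE x in M. f x = g x) \<longrightarrow>
            (AE x in M. T f x = T g x)) \<and>
     (\<forall>f g. integrable M f \<longrightarrow> integrable M g \<longrightarrow>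
            (AE x in M. T (\<lambda>y. f y + g y) x = T f x + T g x)) \<and>
     (\<forall>c f. integrable M f \<longrightarrow> (AE x in M. T (\<lambda>y. c * f y) x = c * T f x)) \<and>
     (\<exists>C. \<forall>f. integrable M f \<longrightarrow> L1norm M (T f) \<le> C * L1norm M f)"

text \<open>Compact operator: the image of the closed unit ball is relatively compact,
  i.e. (L_1 being complete) totally bounded.\<close>
definition compact_L1_operator :: "'a measure \<Rightarrow> (('a \<Rightarrow> real) \<Rightarrow> ('a \<Rightarrow> real)) \<Rightarrow> bool" where
  "compact_L1_operator M K \<longleftrightarrow> L1_operator M K \<and>
     (\<forall>e>0. \<exists>G. finite G \<and> (\<forall>g\<in>G. integrable M g) \<and>
        (\<forall>f. integrable M f \<and> L1norm M f \<le> 1 \<longrightarrow>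
             (\<exists>g\<in>G. L1norm M (\<lambda>x. K f x - g x) < e)))"

definition L1_opnorm :: "'a measure \<Rightarrow> (('a \<Rightarrow> real) \<Rightarrow> ('a \<Rightarrow> real)) \<Rightarrow> real" where
  "L1_opnorm M T = Sup {L1norm M (T f) | f. integrable M f \<and> L1norm M f \<le> 1}"

definition L1_essnorm :: "'a measure \<Rightarrow> (('a \<Rightarrow> real) \<Rightarrow> ('a \<Rightarrow> real)) \<Rightarrow> real" where
  "L1_essnorm M T = Inf {L1_opnorm M (\<lambda>f x. T f x + K f x) | K. compact_L1_operator M K}"

definition mult_op :: "('a \<Rightarrow> real) \<Rightarrow> ('a \<Rightarrow> real) \<Rightarrow> ('a \<Rightarrow> real)" where
  "mult_op u f = (\<lambda>x. u x * f x)"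

definition diffuse_on :: "'a measure \<Rightarrow> 'a set \<Rightarrow> bool" where
  "diffuse_on M D \<longleftrightarrow> (\<forall>A\<in>sets M. A \<subseteq> D \<longrightarrow> 0 < emeasure M A \<longrightarrow>
     (\<exists>A'\<in>sets M. A' \<subseteq> A \<and> 0 < emeasure M A' \<and> emeasure M A' < emeasure M A))"

definition is_atom :: "'a measure \<Rightarrow> 'a set \<Rightarrow> bool" where
  "is_atom M B \<longleftrightarrow> B \<in> sets M \<and>
     (\<forall>B'\<in>sets M. B' \<subseteq> B \<longrightarrow> emeasure M B' = 0 \<or> emeasure M B' = emeasure M B)"

definition atom_val :: "'a measure \<Rightarrow> ('a \<Rightarrow> real) \<Rightarrow> 'a set \<Rightarrow> real" where
  "atom_val M u B = (if emeasure M B = 0 then 0 else (THE c. AE x in M. x \<in> B \<longrightarrow> u x = c))"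

text \<open>L_infinity norm of the restriction of u to D (0 if D is null).\<close>
definition Linf_norm_on :: "'a measure \<Rightarrow> 'a set \<Rightarrow> ('a \<Rightarrow> real) \<Rightarrow> ereal" where
  "Linf_norm_on M D u = max 0 (esssup (restrict_space M D) (\<lambda>x. ereal \<bar>u x\<bar>))"

end

theory Submission
  imports Defs
begin

text \<open>
  A compact K maps the unit ball of L1 onto a totally bounded set. Hence, given
  disjoint sets A_n of positive finite measure with |u| >= c on each, two of the normalised
  indicators f_n = 1_{A_n} / mu(A_n) have images under K at distance less than 2 e, and the
  unit vector h = (f_n - f_m) / 2 satisfies |(M_u + K) h| >= |u h| - |K h| >= c - e.
  Such sequences exist for every c below the essential supremum of |u| on the diffuse
  part, since a diffuse set of positive measure splits off infinitely many disjoint pieces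
  of positive measure, and for every c below the limsup of |u(B_n)|, using the infinitely
  many atoms with |u(B_n)| > c.

  On an atom of finite measure, multiplication by u has rank one. Cutting off
  the finitely many atoms B_0, ..., B_{N-1} is therefore a compact perturbation of M_u, and
  it leaves multiplication by a function that is bounded by any s exceeding both
  quantities, once N is chosen large.
\<close>

section \<open>Atoms and diffuse sets\<close>

lemma eq_of_rat_bounds:
  fixes y c :: real
  assumes "\<forall>r\<in>\<rat>. (r < c \<longrightarrow> r < y) \<and> (c < r \<longrightarrow> y \<le> r)"
  shows "y = c"
proof (rule ccontr)
  assume "y \<noteq> c"
  then consider "y < c" | "c < y" by linarith
  then show False
  proof cases
    case 1
    then obtain r where "r \<in> \<rat>" "y < r" "r < c" using Rats_dense_in_real by blast
    with assms show False by auto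
  next
    case 2
    then obtain r where "r \<in> \<rat>" "c < r" "r < y" using Rats_dense_in_real by blast
    with assms show False by auto
  qed
qed

lemma ereal_le_real_posI:
  fixes x :: ereal
  assumes "0 \<le> z" and "\<And>c. 0 < c \<Longrightarrow> ereal c < x \<Longrightarrow> c \<le> z"
  shows "x \<le> ereal z"
proof (rule dense_le)
  fix y assume y: "y < x"
  show "y \<le> ereal z"
  proof (cases "y \<le> 0")
    case True
    with assms(1) show ?thesis by (simp add: order_trans)
  next
    case False
    with y obtain c where "y = ereal c" "0 < c" by (cases y) auto
    with assms(2) y show ?thesis by simp
  qed
qed

lemma measure_pos_iff: "0 < measure M A \<longleftrightarrow> 0 < emeasure M A \<and> emeasure M A < \<infinity>"
  by (simp add: measure_def enn2real_positive_iff)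

lemma (in sigma_finite_measure) exists_finite_positive_subset:
  assumes "S \<in> sets M" "0 < emeasure M S"
  obtains S' where "S' \<in> sets M" "S' \<subseteq> S" "0 < emeasure M S'" "emeasure M S' < \<infinity>"
proof (cases "emeasure M S = \<infinity>")
  case True
  then show ?thesis
    using approx_PInf_emeasure_with_finite[OF assms(1) True, of 0] that by auto
next
  case False
  then show ?thesis using assms that[of S] by (simp add: less_top)
qed

lemma (in sigma_finite_measure) emeasure_atom_finite:
  assumes at: "is_atom M B"
  shows "emeasure M B < \<infinity>"
proof (rule ccontr)
  assume inf: "\<not> emeasure M B < \<infinity>"
  have B: "B \<in> sets M" using at by (simp add: is_atom_def)
  have "0 < emeasure M B" using inf by (auto simp: zero_less_iff_neq_zero)
  then obtain S where S: "S \<in> sets M" "S \<subseteq> B" "0 < emeasure M S" "emeasure M S < \<infinity>"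
    using exists_finite_positive_subset[OF B] by blast
  then have "emeasure M S = emeasure M B" using at by (auto simp: is_atom_def)
  with S(4) inf show False by simp
qed

lemma atom_AE_cases:
  assumes at: "is_atom M B" and fin: "emeasure M B < \<infinity>" and S: "S \<in> sets M"
  shows "(AE x in M. x \<in> B \<longrightarrow> x \<notin> S) \<or> (AE x in M. x \<in> B \<longrightarrow> x \<in> S)"
proof -
  have B: "B \<in> sets M" using at by (simp add: is_atom_def)
  have "emeasure M (B \<inter> S) = 0 \<or> emeasure M (B \<inter> S) = emeasure M B"
    using at B S by (auto simp: is_atom_def)
  then show ?thesis
  proof
    assume "emeasure M (B \<inter> S) = 0"
    then have "AE x in M. x \<notin> B \<inter> S" using AE_iff_null_sets B S by blast
    then show ?thesis by (auto elim: eventually_mono)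
  next
    assume eq: "emeasure M (B \<inter> S) = emeasure M B"
    have "emeasure M (B \<inter> S) \<le> emeasure M B" using B by (intro emeasure_mono) auto
    then have "emeasure M (B - B \<inter> S) = emeasure M B - emeasure M (B \<inter> S)"
      using B S fin by (intro emeasure_Diff) (auto simp: top_unique)
    moreover have "B - B \<inter> S = B - S" by blast
    ultimately have "emeasure M (B - S) = 0" using eq fin by simp
    then have "AE x in M. x \<notin> B - S" using AE_iff_null_sets B S by blast
    then show ?thesis by (auto elim: eventually_mono)
  qed
qed

lemma atom_AE_bounded:
  fixes f :: "'a \<Rightarrow> real"
  assumes at: "is_atom M B" and fin: "emeasure M B < \<infinity>" and f[measurable]: "f \<in> borel_measurable M"
  obtains C where "AE x in M. x \<in> B \<longrightarrow> \<bar>f x\<bar> < C"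
proof (cases "AE x in M. x \<notin> B")
  case True
  show ?thesis by (rule that[of 0]) (use True in \<open>auto elim: eventually_mono\<close>)
next
  case nonnull: False
  have "\<not> (\<forall>n::nat. AE x in M. x \<in> B \<longrightarrow> \<not> \<bar>f x\<bar> < n)"
  proof
    assume "\<forall>n::nat. AE x in M. x \<in> B \<longrightarrow> \<not> \<bar>f x\<bar> < n"
    then have "AE x in M. \<forall>n::nat. x \<in> B \<longrightarrow> \<not> \<bar>f x\<bar> < n" by (subst AE_all_countable) auto
    then have "AE x in M. x \<notin> B" by eventually_elim (meson reals_Archimedean2)
    with nonnull show False ..
  qed
  then obtain n :: nat where "\<not> (AE x in M. x \<in> B \<longrightarrow> x \<notin> {y \<in> space M. \<bar>f y\<bar> < n})"
    by (auto elim: eventually_mono)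
  then have "AE x in M. x \<in> B \<longrightarrow> x \<in> {y \<in> space M. \<bar>f y\<bar> < n}"
    using atom_AE_cases[OF at fin, of "{y \<in> space M. \<bar>f y\<bar> < n}"] by auto
  then show ?thesis by (intro that[of n]) (auto elim: eventually_mono)
qed

lemma AE_const_on_atom:
  fixes f :: "'a \<Rightarrow> real"
  assumes at: "is_atom M B" and fin: "emeasure M B < \<infinity>" and f[measurable]: "f \<in> borel_measurable M"
  obtains c where "AE x in M. x \<in> B \<longrightarrow> f x = c"
proof (cases "AE x in M. x \<notin> B")
  case True
  show ?thesis by (rule that[of 0]) (use True in \<open>auto elim: eventually_mono\<close>)
next
  case nonnull: False
  obtain C where C: "AE x in M. x \<in> B \<longrightarrow> \<bar>f x\<bar> < C" using atom_AE_bounded[OF at fin f] .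
  define above where "above q \<longleftrightarrow> (AE x in M. x \<in> B \<longrightarrow> q < f x)" for q
  have below: "AE x in M. x \<in> B \<longrightarrow> f x \<le> q" if "\<not> above q" for q
    using atom_AE_cases[OF at fin, of "{y \<in> space M. q < f y}"] that unfolding above_def
    by (auto elim: eventually_mono AE_mp[OF AE_space] simp: not_less)
  have "above (- C)"
    using C unfolding above_def by (auto elim: eventually_mono)
  have bdd: "bdd_above (Collect above)"
  proof (rule bdd_aboveI)
    show "q \<le> C" if "q \<in> Collect above" for q
    proof (rule ccontr)
      assume "\<not> q \<le> C"
      from that C have "AE x in M. x \<notin> B"
        unfolding above_def mem_Collect_eq by eventually_elim (use \<open>\<not> q \<le> C\<close> in auto)
      with nonnull show False ..
    qed
  qed
  define c where "c = Sup (Collect above)"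
  have "AE x in M. x \<in> B \<longrightarrow> (r < c \<longrightarrow> r < f x) \<and> (c < r \<longrightarrow> f x \<le> r)" for r
  proof -
    have "above r" if "r < c"
    proof -
      obtain r' where "above r'" "r < r'"
        using less_cSup_iff[of "Collect above" r] \<open>r < c\<close> \<open>above (- C)\<close> bdd unfolding c_def by auto
      then show ?thesis unfolding above_def by (auto elim: eventually_mono)
    qed
    moreover have "\<not> above r" if "c < r"
      using cSup_upper[OF _ bdd, of r] that by (auto simp: c_def)
    ultimately show ?thesis
      using below[of r] unfolding above_def by (cases "r < c"; cases "c < r") (auto elim: eventually_mono)
  qed
  then have "AE x in M. \<forall>r\<in>\<rat>. x \<in> B \<longrightarrow> (r < c \<longrightarrow> r < f x) \<and> (c < r \<longrightarrow> f x \<le> r)"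
    by (subst AE_ball_countable[OF countable_rat]) simp
  then have "AE x in M. x \<in> B \<longrightarrow> f x = c"
    by eventually_elim (auto intro: eq_of_rat_bounds)
  then show ?thesis by (rule that)
qed

lemma AE_eq_atom_val:
  assumes at: "is_atom M B" and fin: "emeasure M B < \<infinity>" and u: "u \<in> borel_measurable M"
  shows "AE x in M. x \<in> B \<longrightarrow> u x = atom_val M u B"
proof -
  have B: "B \<in> sets M" using at by (simp add: is_atom_def)
  obtain c where c: "AE x in M. x \<in> B \<longrightarrow> u x = c" using AE_const_on_atom[OF at fin u] .
  show ?thesis
  proof (cases "emeasure M B = 0")
    case True
    then have "AE x in M. x \<notin> B" using AE_iff_null_sets B by blast
    then show ?thesis by (auto elim: eventually_mono)
  next
    case False
    have "(THE c. AE x in M. x \<in> B \<longrightarrow> u x = c) = c"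
    proof (rule the_equality)
      fix d assume d: "AE x in M. x \<in> B \<longrightarrow> u x = d"
      show "d = c"
      proof (rule ccontr)
        assume "d \<noteq> c"
        from c d have "AE x in M. x \<notin> B" by eventually_elim (use \<open>d \<noteq> c\<close> in auto)
        with False B show False using AE_iff_null_sets by blast
      qed
    qed (rule c)
    with c False show ?thesis by (simp add: atom_val_def)
  qed
qed

lemma abs_atom_val_le:
  assumes at: "is_atom M B" and fin: "emeasure M B < \<infinity>" and u: "u \<in> borel_measurable M"
    and bound: "AE x in M. \<bar>u x\<bar> \<le> C" and "0 \<le> C"
  shows "\<bar>atom_val M u B\<bar> \<le> C"
proof (rule ccontr)
  assume gt: "\<not> \<bar>atom_val M u B\<bar> \<le> C"
  have B: "B \<in> sets M" using at by (simp add: is_atom_def)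
  have "AE x in M. x \<notin> B" using AE_eq_atom_val[OF at fin u] bound by eventually_elim (use gt in auto)
  then have "emeasure M B = 0" using AE_iff_null_sets B by blast
  with gt \<open>0 \<le> C\<close> show False by (simp add: atom_val_def)
qed

lemma diffuse_on_split:
  assumes dif: "diffuse_on M D" and R: "R \<in> sets M" "R \<subseteq> D" "0 < emeasure M R"
  shows "\<exists>R'. R' \<in> sets M \<and> R' \<subseteq> R \<and> 0 < emeasure M R' \<and> 0 < emeasure M (R - R')"
proof -
  obtain R' where R': "R' \<in> sets M" "R' \<subseteq> R" "0 < emeasure M R'" "emeasure M R' < emeasure M R"
    using dif R unfolding diffuse_on_def by blast
  then have "emeasure M (R - R') = emeasure M R - emeasure M R'"
    using R(1) by (intro emeasure_Diff) (auto simp: less_top[symmetric] dest: order.strict_trans2[OF _ top_greatest])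
  also have "\<dots> > 0" using R' by (intro diff_gr0_ennreal) auto
  finally show ?thesis using R' by blast
qed

lemma diffuse_on_disjoint_family:
  assumes dif: "diffuse_on M D" and S: "S \<in> sets M" "S \<subseteq> D" "0 < emeasure M S"
  obtains A :: "nat \<Rightarrow> 'a set"
  where "disjoint_family A" "\<And>n. A n \<in> sets M" "\<And>n. A n \<subseteq> S" "\<And>n. 0 < emeasure M (A n)"
proof -
  define pos where "pos R \<longleftrightarrow> R \<in> sets M \<and> R \<subseteq> S \<and> 0 < emeasure M R" for R
  define piece where "piece R =
    (SOME R'. R' \<in> sets M \<and> R' \<subseteq> R \<and> 0 < emeasure M R' \<and> 0 < emeasure M (R - R'))" for R
  have piece: "piece R \<in> sets M \<and> piece R \<subseteq> R \<and> 0 < emeasure M (piece R) \<and> 0 < emeasure M (R - piece R)"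
    if "pos R" for R
  proof -
    have "\<exists>R'. R' \<in> sets M \<and> R' \<subseteq> R \<and> 0 < emeasure M R' \<and> 0 < emeasure M (R - R')"
      using that S(2) by (intro diffuse_on_split[OF dif]) (auto simp: pos_def)
    then show ?thesis unfolding piece_def by (rule someI_ex)
  qed
  define R where "R n = ((\<lambda>R. R - piece R) ^^ n) S" for n
  have R_Suc: "R (Suc n) = R n - piece (R n)" for n unfolding R_def by simp
  have pos_R: "pos (R n)" for n
  proof (induction n)
    case 0
    then show ?case using S by (simp add: R_def pos_def)
  next
    case (Suc n)
    then show ?case using piece[OF Suc] unfolding R_Suc pos_def by auto
  qed
  have R_decseq: "decseq R" by (rule decseq_SucI) (auto simp: R_Suc)
  define A where "A n = piece (R n)" for n
  have A: "A n \<in> sets M" "A n \<subseteq> R n" "0 < emeasure M (A n)" for n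
    using piece[OF pos_R[of n]] by (auto simp: A_def)
  have disjoint_lt: "A n \<inter> A m = {}" if "n < m" for n m
  proof -
    have "A m \<subseteq> R (Suc n)" using A(2)[of m] decseqD[OF R_decseq, of "Suc n" m] that by auto
    then show ?thesis by (auto simp: R_Suc A_def)
  qed
  have disj: "disjoint_family A"
    unfolding disjoint_family_on_def
  proof (intro ballI impI)
    fix n m :: nat assume "n \<noteq> m"
    then consider "n < m" | "m < n" by linarith
    then show "A n \<inter> A m = {}" using disjoint_lt by cases (auto simp: Int_commute)
  qed
  have "A n \<subseteq> S" for n using A(2)[of n] pos_R[of n] by (auto simp: pos_def)
  from disj A(1) this A(3) show ?thesis by (rule that)
qed

lemma Linf_norm_on_le_iff:
  fixes u :: "'a \<Rightarrow> real"
  assumes D: "D \<in> sets M" and u: "u \<in> borel_measurable M" and s: "0 \<le> s"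
  shows "Linf_norm_on M D u \<le> ereal s \<longleftrightarrow> (AE x in M. x \<in> D \<longrightarrow> \<bar>u x\<bar> \<le> s)"
proof -
  let ?f = "\<lambda>x. ereal \<bar>u x\<bar>"
  have meas: "?f \<in> borel_measurable (restrict_space M D)"
    using u by (intro measurable_restrict_space1) simp
  have "Linf_norm_on M D u \<le> ereal s \<longleftrightarrow> esssup (restrict_space M D) ?f \<le> ereal s"
    using s by (simp add: Linf_norm_on_def)
  also have "\<dots> \<longleftrightarrow> (AE x in restrict_space M D. ?f x \<le> ereal s)"
  proof
    assume le: "esssup (restrict_space M D) ?f \<le> ereal s"
    from esssup_AE[of ?f "restrict_space M D"] show "AE x in restrict_space M D. ?f x \<le> ereal s"
      by eventually_elim (use le in \<open>metis order_trans\<close>)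
  qed (rule esssup_I[OF meas])
  also have "\<dots> \<longleftrightarrow> (AE x in M. x \<in> D \<longrightarrow> \<bar>u x\<bar> \<le> s)"
    using D by (simp add: AE_restrict_space_iff)
  finally show ?thesis .
qed

section \<open>The L1 norm and bounded operators on L1\<close>

lemma L1norm_nonneg: "0 \<le> L1norm M f"
  unfolding L1norm_def by (rule integral_nonneg_AE) auto

lemma L1norm_add_le:
  assumes "integrable M f" "integrable M g"
  shows "L1norm M (\<lambda>x. f x + g x) \<le> L1norm M f + L1norm M g"
proof -
  have "L1norm M (\<lambda>x. f x + g x) \<le> integral\<^sup>L M (\<lambda>x. \<bar>f x\<bar> + \<bar>g x\<bar>)"
    unfolding L1norm_def using assms by (intro integral_mono) auto
  also have "\<dots> = L1norm M f + L1norm M g"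
    unfolding L1norm_def using assms by (intro Bochner_Integration.integral_add) auto
  finally show ?thesis .
qed

lemma L1norm_diff_le:
  assumes "integrable M f" "integrable M g"
  shows "L1norm M (\<lambda>x. f x - g x) \<le> L1norm M f + L1norm M g"
  using L1norm_add_le[of M f "\<lambda>x. - g x"] assms by (simp add: L1norm_def)

lemma L1norm_cong_AE:
  assumes "f \<in> borel_measurable M" "g \<in> borel_measurable M" "AE x in M. f x = g x"
  shows "L1norm M f = L1norm M g"
  unfolding L1norm_def using assms by (intro integral_cong_AE) (auto elim: eventually_mono)

lemma L1norm_cmult: "L1norm M (\<lambda>x. c * f x) = \<bar>c\<bar> * L1norm M f"
  unfolding L1norm_def by (simp add: abs_mult)

lemma L1norm_diff_disjoint_support:
  assumes "integrable M f" "integrable M g" "\<And>x. f x = 0 \<or> g x = 0"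
  shows "L1norm M (\<lambda>x. f x - g x) = L1norm M f + L1norm M g"
proof -
  have "\<bar>f x - g x\<bar> = \<bar>f x\<bar> + \<bar>g x\<bar>" for x
    using assms(3)[of x] by auto
  then show ?thesis
    unfolding L1norm_def using assms(1,2) by simp
qed

lemma L1norm_mult_bounded:
  fixes u :: "'a \<Rightarrow> real"
  assumes u: "u \<in> borel_measurable M" and bound: "AE x in M. \<bar>u x\<bar> \<le> C" and f: "integrable M f"
  shows integrable_mult_bounded: "integrable M (\<lambda>x. u x * f x)"
    and L1norm_mult_bounded_le: "L1norm M (\<lambda>x. u x * f x) \<le> max 0 C * L1norm M f"
proof -
  have le: "AE x in M. \<bar>u x * f x\<bar> \<le> max 0 C * \<bar>f x\<bar>"
    using bound by eventually_elim (simp add: abs_mult mult_right_mono)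
  have norm_le: "AE x in M. norm (u x * f x) \<le> norm (max 0 C * f x)"
    using le by eventually_elim (simp add: abs_mult)
  have meas: "(\<lambda>x. u x * f x) \<in> borel_measurable M" using u f by simp
  have "integrable M (\<lambda>x. max 0 C * f x)" using f by simp
  from this meas norm_le show int: "integrable M (\<lambda>x. u x * f x)"
    by (rule Bochner_Integration.integrable_bound)
  have "L1norm M (\<lambda>x. u x * f x) \<le> integral\<^sup>L M (\<lambda>x. max 0 C * \<bar>f x\<bar>)"
    unfolding L1norm_def using int f le by (intro integral_mono_AE) simp_all
  then show "L1norm M (\<lambda>x. u x * f x) \<le> max 0 C * L1norm M f"
    by (simp add: L1norm_def)
qed

lemma L1norm_mult_ge:
  fixes u h :: "'a \<Rightarrow> real"
  assumes h: "integrable M h" and uh: "integrable M (\<lambda>x. u x * h x)"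
    and ge: "AE x in M. h x \<noteq> 0 \<longrightarrow> c \<le> \<bar>u x\<bar>"
  shows "c * L1norm M h \<le> L1norm M (\<lambda>x. u x * h x)"
proof -
  have "AE x in M. c * \<bar>h x\<bar> \<le> \<bar>u x * h x\<bar>"
    using ge by eventually_elim (auto simp: abs_mult mult_right_mono)
  then have "integral\<^sup>L M (\<lambda>x. c * \<bar>h x\<bar>) \<le> L1norm M (\<lambda>x. u x * h x)"
    unfolding L1norm_def using h uh by (intro integral_mono_AE) auto
  then show ?thesis by (simp add: L1norm_def)
qed

lemma normalized_indicator:
  assumes "A \<in> sets M" "0 < measure M A"
  shows "integrable M (\<lambda>x. indicator A x / measure M A)"
    and "L1norm M (\<lambda>x. indicator A x / measure M A) = 1"
proof -
  have int: "integrable M (indicator A :: 'a \<Rightarrow> real)"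
    using assms by (intro integrable_real_indicator) (auto simp: measure_pos_iff)
  then show "integrable M (\<lambda>x. indicator A x / measure M A)" by simp
  show "L1norm M (\<lambda>x. indicator A x / measure M A) = 1"
    using int assms unfolding L1norm_def
    by (simp add: Int_absorb2 sets.sets_into_space)
qed

lemma L1_operatorD:
  assumes "L1_operator M T"
  shows L1_operator_integrable: "\<And>f. integrable M f \<Longrightarrow> integrable M (T f)"
    and L1_operator_cong_AE: "\<And>f g. integrable M f \<Longrightarrow> integrable M g \<Longrightarrow> AE x in M. f x = g x \<Longrightarrow>
            AE x in M. T f x = T g x"
    and L1_operator_add_AE: "\<And>f g. integrable M f \<Longrightarrow> integrable M g \<Longrightarrow>
            AE x in M. T (\<lambda>y. f y + g y) x = T f x + T g x"
    and L1_operator_cmult_AE: "\<And>c f. integrable M f \<Longrightarrow> AE x in M. T (\<lambda>y. c * f y) x = c * T f x"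
    and L1_operator_bounded: "\<exists>C. \<forall>f. integrable M f \<longrightarrow> L1norm M (T f) \<le> C * L1norm M f"
  using assms unfolding L1_operator_def by simp_all

lemma L1_operator_mult_op:
  fixes u :: "'a \<Rightarrow> real"
  assumes "u \<in> borel_measurable M" "AE x in M. \<bar>u x\<bar> \<le> C"
  shows "L1_operator M (mult_op u)"
  unfolding L1_operator_def mult_op_def
  using integrable_mult_bounded[OF assms] L1norm_mult_bounded_le[OF assms]
  by (auto simp: algebra_simps elim: eventually_mono intro!: exI[of _ "max 0 C"])

lemma L1_operator_add:
  assumes S: "L1_operator M S" and T: "L1_operator M T"
  shows "L1_operator M (\<lambda>f x. S f x + T f x)"
  unfolding L1_operator_def
proof (intro conjI allI impI)
  fix f g :: "'a \<Rightarrow> real" assume f: "integrable M f" and g: "integrable M g"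
  show "integrable M (\<lambda>x. S f x + T f x)"
    using L1_operator_integrable[OF S f] L1_operator_integrable[OF T f] by simp
  show "AE x in M. S (\<lambda>y. f y + g y) x + T (\<lambda>y. f y + g y) x = S f x + T f x + (S g x + T g x)"
    using L1_operator_add_AE[OF S f g] L1_operator_add_AE[OF T f g] by eventually_elim simp
  assume fg: "AE x in M. f x = g x"
  show "AE x in M. S f x + T f x = S g x + T g x"
    using L1_operator_cong_AE[OF S f g fg] L1_operator_cong_AE[OF T f g fg] by eventually_elim simp
next
  fix c and f :: "'a \<Rightarrow> real" assume f: "integrable M f"
  show "AE x in M. S (\<lambda>y. c * f y) x + T (\<lambda>y. c * f y) x = c * (S f x + T f x)"
    using L1_operator_cmult_AE[OF S f, of c] L1_operator_cmult_AE[OF T f, of c]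
    by eventually_elim (simp add: distrib_left)
next
  obtain CS CT where
    CS: "\<And>f. integrable M f \<Longrightarrow> L1norm M (S f) \<le> CS * L1norm M f" and
    CT: "\<And>f. integrable M f \<Longrightarrow> L1norm M (T f) \<le> CT * L1norm M f"
    using L1_operator_bounded[OF S] L1_operator_bounded[OF T] by blast
  have "L1norm M (\<lambda>x. S f x + T f x) \<le> (CS + CT) * L1norm M f" if "integrable M f" for f
    using L1norm_add_le[OF L1_operator_integrable[OF S that] L1_operator_integrable[OF T that]]
      CS[OF that] CT[OF that] by (simp add: distrib_right)
  then show "\<exists>C. \<forall>f. integrable M f \<longrightarrow> L1norm M (\<lambda>x. S f x + T f x) \<le> C * L1norm M f"
    by blast
qed

lemma L1_operator_diff_AE:
  assumes T: "L1_operator M T" and f: "integrable M f" and g: "integrable M g"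
  shows "AE x in M. T (\<lambda>y. f y - g y) x = T f x - T g x"
proof -
  have "(\<lambda>y. f y - g y) = (\<lambda>y. f y + (-1) * g y)" by simp
  moreover have "AE x in M. T (\<lambda>y. f y + (-1) * g y) x = T f x + T (\<lambda>y. (-1) * g y) x"
    using g by (intro L1_operator_add_AE[OF T f]) simp
  moreover have "AE x in M. T (\<lambda>y. (-1) * g y) x = (-1) * T g x"
    by (rule L1_operator_cmult_AE[OF T g])
  ultimately show ?thesis by (auto elim: eventually_elim2)
qed

lemma L1norm_le_L1_opnorm:
  assumes T: "L1_operator M T" and f: "integrable M f" "L1norm M f \<le> 1"
  shows "L1norm M (T f) \<le> L1_opnorm M T"
proof -
  obtain C where C: "\<And>f. integrable M f \<Longrightarrow> L1norm M (T f) \<le> C * L1norm M f"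
    using L1_operator_bounded[OF T] by blast
  have "L1norm M (T g) \<le> \<bar>C\<bar>" if "integrable M g" "L1norm M g \<le> 1" for g
  proof -
    have "C * L1norm M g \<le> \<bar>C\<bar> * 1"
      using that L1norm_nonneg[of M g] by (intro mult_mono) auto
    with C[OF that(1)] show ?thesis by simp
  qed
  then have "bdd_above {L1norm M (T g) | g. integrable M g \<and> L1norm M g \<le> 1}"
    by (auto intro!: bdd_aboveI)
  with f show ?thesis unfolding L1_opnorm_def by (auto intro!: cSup_upper)
qed

lemma L1_opnorm_nonneg:
  assumes "L1_operator M T"
  shows "0 \<le> L1_opnorm M T"
  using order_trans[OF L1norm_nonneg L1norm_le_L1_opnorm[OF assms, of "\<lambda>x. 0"]]
  by (simp add: L1norm_def)

lemma L1_opnorm_le: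
  assumes "\<And>f. integrable M f \<Longrightarrow> L1norm M f \<le> 1 \<Longrightarrow> L1norm M (T f) \<le> r"
  shows "L1_opnorm M T \<le> r"
  unfolding L1_opnorm_def
proof (rule cSup_least)
  show "{L1norm M (T f) | f. integrable M f \<and> L1norm M f \<le> 1} \<noteq> {}"
    by (auto intro!: exI[of _ "\<lambda>x. 0"] simp: L1norm_def)
qed (use assms in auto)

lemma L1_opnorm_mult_op_le:
  fixes u :: "'a \<Rightarrow> real"
  assumes "u \<in> borel_measurable M" "AE x in M. \<bar>u x\<bar> \<le> r" "0 \<le> r"
  shows "L1_opnorm M (mult_op u) \<le> r"
proof (rule L1_opnorm_le)
  fix f assume f: "integrable M f" "L1norm M f \<le> 1"
  have "L1norm M (\<lambda>x. u x * f x) \<le> r * L1norm M f"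
    using L1norm_mult_bounded_le[OF assms(1,2) f(1)] \<open>0 \<le> r\<close> by simp
  also have "\<dots> \<le> r" using f(2) \<open>0 \<le> r\<close> by (simp add: mult_left_le)
  finally show "L1norm M (mult_op u f) \<le> r" by (simp add: mult_op_def)
qed

section \<open>Compact operators on L1\<close>

definition L1_image_totally_bounded :: "'a measure \<Rightarrow> (('a \<Rightarrow> real) \<Rightarrow> ('a \<Rightarrow> real)) \<Rightarrow> bool" where
  "L1_image_totally_bounded M K \<longleftrightarrow>
     (\<forall>e>0. \<exists>G. finite G \<and> (\<forall>g\<in>G. integrable M g) \<and>
        (\<forall>f. integrable M f \<and> L1norm M f \<le> 1 \<longrightarrow> (\<exists>g\<in>G. L1norm M (\<lambda>x. K f x - g x) < e)))"

lemma compact_L1_operator_iff: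
  "compact_L1_operator M K \<longleftrightarrow> L1_operator M K \<and> L1_image_totally_bounded M K"
  unfolding compact_L1_operator_def L1_image_totally_bounded_def ..

lemma L1_image_totally_bounded_zero: "L1_image_totally_bounded M (\<lambda>f x. 0)"
  unfolding L1_image_totally_bounded_def L1norm_def
  by (intro allI impI exI[of _ "{\<lambda>x. 0}"]) auto

lemma L1_image_totally_bounded_add:
  assumes K1: "L1_image_totally_bounded M K1" and K2: "L1_image_totally_bounded M K2"
    and int1: "\<And>f. integrable M f \<Longrightarrow> integrable M (K1 f)"
    and int2: "\<And>f. integrable M f \<Longrightarrow> integrable M (K2 f)"
  shows "L1_image_totally_bounded M (\<lambda>f x. K1 f x + K2 f x)"
  unfolding L1_image_totally_bounded_def
proof (intro allI impI)
  fix e :: real assume "0 < e"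
  then have e2: "0 < e/2" by simp
  obtain G1 where G1: "finite G1" "\<forall>g\<in>G1. integrable M g"
      "\<forall>f. integrable M f \<and> L1norm M f \<le> 1 \<longrightarrow> (\<exists>g\<in>G1. L1norm M (\<lambda>x. K1 f x - g x) < e/2)"
    using K1[unfolded L1_image_totally_bounded_def, rule_format, OF e2] by blast
  obtain G2 where G2: "finite G2" "\<forall>g\<in>G2. integrable M g"
      "\<forall>f. integrable M f \<and> L1norm M f \<le> 1 \<longrightarrow> (\<exists>g\<in>G2. L1norm M (\<lambda>x. K2 f x - g x) < e/2)"
    using K2[unfolded L1_image_totally_bounded_def, rule_format, OF e2] by blast
  define G where "G = (\<lambda>(g1, g2) x. g1 x + g2 x) ` (G1 \<times> G2)"
  show "\<exists>G. finite G \<and> (\<forall>g\<in>G. integrable M g) \<and> (\<forall>f. integrable M f \<and> L1norm M f \<le> 1 \<longrightarrow>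
          (\<exists>g\<in>G. L1norm M (\<lambda>x. K1 f x + K2 f x - g x) < e))"
  proof (intro exI[of _ G] conjI allI impI ballI)
    show "finite G" "\<And>g. g \<in> G \<Longrightarrow> integrable M g"
      using G1 G2 unfolding G_def by auto
    fix f assume f: "integrable M f \<and> L1norm M f \<le> 1"
    obtain g1 g2 where g: "g1 \<in> G1" "L1norm M (\<lambda>x. K1 f x - g1 x) < e/2"
      "g2 \<in> G2" "L1norm M (\<lambda>x. K2 f x - g2 x) < e/2"
      using G1(3) G2(3) f by blast
    have "L1norm M (\<lambda>x. K1 f x + K2 f x - (g1 x + g2 x))
        = L1norm M (\<lambda>x. (K1 f x - g1 x) + (K2 f x - g2 x))"
      by (simp add: algebra_simps)
    also have "\<dots> \<le> L1norm M (\<lambda>x. K1 f x - g1 x) + L1norm M (\<lambda>x. K2 f x - g2 x)"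
      using int1 int2 f g G1(2) G2(2) by (intro L1norm_add_le) auto
    also have "\<dots> < e" using g by simp
    finally show "\<exists>g\<in>G. L1norm M (\<lambda>x. K1 f x + K2 f x - g x) < e"
      using g unfolding G_def by (intro bexI[of _ "\<lambda>x. g1 x + g2 x"]) auto
  qed
qed

lemma L1_image_totally_bounded_sum:
  assumes "\<And>i. i \<in> I \<Longrightarrow> L1_image_totally_bounded M (K i)"
    and "\<And>i f. i \<in> I \<Longrightarrow> integrable M f \<Longrightarrow> integrable M (K i f)"
  shows "L1_image_totally_bounded M (\<lambda>f x. \<Sum>i\<in>I. K i f x)"
  using assms
proof (induction I rule: infinite_finite_induct)
  case (insert i I)
  have "L1_image_totally_bounded M (\<lambda>f x. K i f x + (\<Sum>j\<in>I. K j f x))"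
    using insert by (intro L1_image_totally_bounded_add) auto
  with insert show ?case by simp
qed (simp_all add: L1_image_totally_bounded_zero)

lemma L1_image_totally_bounded_rank_one:
  assumes g: "integrable M g"
    and coeff: "\<And>f. integrable M f \<Longrightarrow> L1norm M f \<le> 1 \<Longrightarrow> \<exists>a. \<bar>a\<bar> \<le> R \<and> (AE x in M. K f x = a * g x)"
    and K: "\<And>f. integrable M f \<Longrightarrow> K f \<in> borel_measurable M"
  shows "L1_image_totally_bounded M K"
  unfolding L1_image_totally_bounded_def
proof (intro allI impI)
  fix e :: real assume e: "0 < e"
  define \<delta> where "\<delta> = e / (L1norm M g + 1)"
  have pos: "0 < L1norm M g + 1" using L1norm_nonneg[of M g] by linarith
  have \<delta>: "0 < \<delta>" "\<delta> * L1norm M g < e"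
    using e pos by (simp_all add: \<delta>_def field_simps)
  obtain T where T: "finite T" "{-R..R} \<subseteq> (\<Union>t\<in>T. ball t \<delta>)"
    using compactE_image[OF compact_Icc[of "-R" R], of "{-R..R}" "\<lambda>t. ball t \<delta>"] \<delta>(1)
    by (metis (no_types, lifting) UN_iff centre_in_ball open_ball subsetI)
  show "\<exists>G. finite G \<and> (\<forall>g\<in>G. integrable M g) \<and> (\<forall>f. integrable M f \<and> L1norm M f \<le> 1 \<longrightarrow>
          (\<exists>g'\<in>G. L1norm M (\<lambda>x. K f x - g' x) < e))"
  proof (intro exI[of _ "(\<lambda>t x. t * g x) ` T"] conjI allI impI ballI)
    show "finite ((\<lambda>t x. t * g x) ` T)" "\<And>g'. g' \<in> (\<lambda>t x. t * g x) ` T \<Longrightarrow> integrable M g'"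
      using T g by (auto intro: integrable_mult_right)
    fix f assume f: "integrable M f \<and> L1norm M f \<le> 1"
    then obtain a where a: "\<bar>a\<bar> \<le> R" "AE x in M. K f x = a * g x" using coeff by blast
    then have "a \<in> {-R..R}" by auto
    then obtain t where t: "t \<in> T" "dist t a < \<delta>"
      using T(2) by (auto simp: mem_ball)
    have "L1norm M (\<lambda>x. K f x - t * g x) = L1norm M (\<lambda>x. (a - t) * g x)"
      using a(2) K f g by (intro L1norm_cong_AE) (auto elim: eventually_mono simp: algebra_simps)
    also have "\<dots> \<le> \<delta> * L1norm M g"
      using t L1norm_nonneg[of M g]
      by (simp add: L1norm_cmult mult_right_mono dist_real_def abs_minus_commute)
    also have "\<dots> < e" using \<delta> by simp
    finally show "\<exists>g'\<in>(\<lambda>t x. t * g x) ` T. L1norm M (\<lambda>x. K f x - g' x) < e"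
      using t by (intro bexI[of _ "\<lambda>x. t * g x"]) auto
  qed
qed

lemma L1_image_totally_bounded_mult_atom:
  fixes w :: "'a \<Rightarrow> real"
  assumes at: "is_atom M B" and fin: "emeasure M B < \<infinity>" and w[measurable]: "w \<in> borel_measurable M"
  shows "L1_image_totally_bounded M (mult_op (\<lambda>x. indicator B x * w x))"
proof -
  have B[measurable]: "B \<in> sets M" using at by (simp add: is_atom_def)
  define v where "v = atom_val M w B"
  have wv: "AE x in M. x \<in> B \<longrightarrow> w x = v" unfolding v_def by (rule AE_eq_atom_val[OF at fin w])
  show ?thesis
  proof (rule L1_image_totally_bounded_rank_one)
    show "integrable M (\<lambda>x. v * indicator B x)"
      using integrable_real_indicator[OF B fin] by simp
    show "mult_op (\<lambda>x. indicator B x * w x) f \<in> borel_measurable M" if "integrable M f" for f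
    proof -
      have [measurable]: "f \<in> borel_measurable M" using that by (rule borel_measurable_integrable)
      show ?thesis unfolding mult_op_def by measurable
    qed
    fix f assume f: "integrable M f" "L1norm M f \<le> 1"
    obtain a where a: "AE x in M. x \<in> B \<longrightarrow> f x = a"
      using AE_const_on_atom[OF at fin] f by blast
    have "\<bar>a\<bar> * measure M B = integral\<^sup>L M (\<lambda>x. \<bar>a\<bar> * indicator B x)"
      by simp
    also have "\<dots> \<le> L1norm M f" unfolding L1norm_def
      using f integrable_real_indicator[OF B fin]
      by (intro integral_mono_AE) (auto intro!: eventually_mono[OF a] split: split_indicator)
    finally have a_le: "\<bar>a\<bar> * measure M B \<le> 1" using f by simp
    show "\<exists>a. \<bar>a\<bar> \<le> 1 / measure M B \<and>
            (AE x in M. mult_op (\<lambda>x. indicator B x * w x) f x = a * (v * indicator B x))"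
    proof (cases "measure M B = 0")
      case True
      then have "emeasure M B = 0" using emeasure_eq_measure2[OF fmeasurableI[OF B fin]] by simp
      then have "AE x in M. x \<notin> B" using AE_iff_null_sets B by blast
      then show ?thesis
        by (intro exI[of _ 0]) (auto simp: mult_op_def True elim: eventually_mono)
    next
      case False
      then have "0 < measure M B" by (simp add: zero_less_measure_iff)
      then have "\<bar>a\<bar> \<le> 1 / measure M B" using a_le by (simp add: field_simps)
      moreover have "AE x in M. mult_op (\<lambda>x. indicator B x * w x) f x = a * (v * indicator B x)"
        using a wv by eventually_elim (auto simp: mult_op_def split: split_indicator)
      ultimately show ?thesis by blast
    qed
  qed
qed

lemma compact_L1_operator_mult_atoms:
  fixes w :: "'a \<Rightarrow> real" and B :: "nat \<Rightarrow> 'a set"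
  assumes at: "\<And>n. is_atom M (B n)" and fin: "\<And>n. emeasure M (B n) < \<infinity>"
    and disj: "disjoint_family B"
    and w[measurable]: "w \<in> borel_measurable M" and bound: "AE x in M. \<bar>w x\<bar> \<le> C"
  shows "compact_L1_operator M (mult_op (\<lambda>x. indicator (\<Union>n<N. B n) x * w x))"
proof -
  have B[measurable]: "B n \<in> sets M" for n using at by (simp add: is_atom_def)
  have bounded: "AE x in M. \<bar>indicator S x * w x\<bar> \<le> C" for S :: "'a set"
    using bound by eventually_elim (auto simp: indicator_def)
  have ind: "indicator (\<Union>n<N. B n) x = (\<Sum>n<N. indicator (B n) x :: real)" for x
    using disj by (intro indicator_UN_disjoint) (auto simp: disjoint_family_on_def)
  have split: "mult_op (\<lambda>x. indicator (\<Union>n<N. B n) x * w x) =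
      (\<lambda>f x. \<Sum>n<N. mult_op (\<lambda>x. indicator (B n) x * w x) f x)"
    by (simp only: mult_op_def[abs_def] ind sum_distrib_right)
  have "L1_image_totally_bounded M (mult_op (\<lambda>x. indicator (\<Union>n<N. B n) x * w x))"
    unfolding split
  proof (rule L1_image_totally_bounded_sum)
    show "L1_image_totally_bounded M (mult_op (\<lambda>x. indicator (B n) x * w x))" for n
      using at fin w by (rule L1_image_totally_bounded_mult_atom)
    show "integrable M (mult_op (\<lambda>x. indicator (B n) x * w x) f)" if "integrable M f" for n f
      using integrable_mult_bounded[OF _ bounded that] by (simp add: mult_op_def)
  qed
  moreover have "L1_operator M (mult_op (\<lambda>x. indicator (\<Union>n<N. B n) x * w x))"
    by (rule L1_operator_mult_op[OF _ bounded]) measurable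
  ultimately show ?thesis by (simp add: compact_L1_operator_iff)
qed

lemma compact_L1_operator_close_pair:
  assumes K: "compact_L1_operator M K"
    and f: "\<And>n. integrable M (f n)" "\<And>n. L1norm M (f n) \<le> 1" and e: "0 < e"
  obtains n m :: nat where "n \<noteq> m" "L1norm M (\<lambda>x. K (f n) x - K (f m) x) < 2 * e"
proof -
  have KL: "L1_operator M K" using K by (simp add: compact_L1_operator_iff)
  obtain G where G: "finite G" "\<forall>g\<in>G. integrable M g"
    "\<forall>f. integrable M f \<and> L1norm M f \<le> 1 \<longrightarrow> (\<exists>g\<in>G. L1norm M (\<lambda>x. K f x - g x) < e)"
    using K[unfolded compact_L1_operator_iff L1_image_totally_bounded_def] e by blast
  then have "\<forall>n. \<exists>g. g \<in> G \<and> L1norm M (\<lambda>x. K (f n) x - g x) < e" using f by blast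
  then obtain g where g: "\<And>n. g n \<in> G" "\<And>n. L1norm M (\<lambda>x. K (f n) x - g n x) < e"
    by metis
  have "\<not> inj g"
  proof
    assume "inj g"
    moreover have "finite (range g)" using G(1) g(1) by (meson finite_subset image_subsetI)
    ultimately show False using finite_imageD by fastforce
  qed
  then obtain n m where nm: "n \<noteq> m" "g n = g m" by (auto simp: inj_on_def)
  have "L1norm M (\<lambda>x. K (f n) x - K (f m) x)
      = L1norm M (\<lambda>x. (K (f n) x - g n x) - (K (f m) x - g m x))"
    using nm(2) by simp
  also have "\<dots> \<le> L1norm M (\<lambda>x. K (f n) x - g n x) + L1norm M (\<lambda>x. K (f m) x - g m x)"
    using L1_operator_integrable[OF KL f(1)] G(2) g(1) by (intro L1norm_diff_le) auto
  also have "\<dots> < 2 * e" using g(2)[of n] g(2)[of m] by simp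
  finally show ?thesis using nm(1) that by blast
qed

lemma L1_essnorm_eqI:
  assumes finite: "\<bar>x\<bar> \<noteq> \<infinity>"
    and lower: "\<And>K. compact_L1_operator M K \<Longrightarrow> x \<le> ereal (L1_opnorm M (\<lambda>f y. T f y + K f y))"
    and upper: "\<And>s. x < ereal s \<Longrightarrow>
                  \<exists>K. compact_L1_operator M K \<and> L1_opnorm M (\<lambda>f y. T f y + K f y) \<le> s"
  shows "ereal (L1_essnorm M T) = x"
proof -
  obtain r where x: "x = ereal r" using finite by (cases x) auto
  define S where "S = {L1_opnorm M (\<lambda>f y. T f y + K f y) | K. compact_L1_operator M K}"
  have S_lower: "r \<le> s" if "s \<in> S" for s
    using that lower unfolding S_def x by auto
  have S_upper: "\<exists>s\<in>S. s \<le> r + e" if "0 < e" for e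
    using upper[of "r + e"] that unfolding S_def x by auto
  have "r \<le> Inf S"
    using S_upper[of 1] S_lower by (intro cInf_greatest) auto
  moreover have "Inf S \<le> r"
  proof (rule field_le_epsilon)
    fix e :: real assume "0 < e"
    then obtain s where "s \<in> S" "s \<le> r + e" using S_upper by blast
    moreover have "bdd_below S" using S_lower by (rule bdd_belowI)
    ultimately show "Inf S \<le> r + e" using cInf_lower order_trans by blast
  qed
  ultimately show ?thesis unfolding L1_essnorm_def S_def[symmetric] x by simp
qed

section \<open>The essential norm of a multiplication operator\<close>

lemma L1_opnorm_mult_op_add_compact_ge:
  fixes u :: "'a \<Rightarrow> real" and A :: "nat \<Rightarrow> 'a set"
  assumes u: "u \<in> borel_measurable M" and bound: "AE x in M. \<bar>u x\<bar> \<le> C"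
    and A: "\<And>n. A n \<in> sets M" "\<And>n. 0 < measure M (A n)" "disjoint_family A"
    and ge: "\<And>n. AE x in M. x \<in> A n \<longrightarrow> c \<le> \<bar>u x\<bar>"
    and K: "compact_L1_operator M K"
  shows "c \<le> L1_opnorm M (\<lambda>f x. mult_op u f x + K f x)"
proof (rule field_le_epsilon)
  fix e :: real assume e: "0 < e"
  have KL: "L1_operator M K" using K by (simp add: compact_L1_operator_iff)
  have T: "L1_operator M (\<lambda>f x. mult_op u f x + K f x)"
    by (rule L1_operator_add[OF L1_operator_mult_op[OF u bound] KL])
  define f where "f n x = indicator (A n) x / measure M (A n)" for n x
  have f: "integrable M (f n)" "L1norm M (f n) = 1" for n
    unfolding f_def using normalized_indicator[OF A(1,2)] by auto
  obtain n m where nm: "n \<noteq> m" "L1norm M (\<lambda>x. K (f n) x - K (f m) x) < 2 * e"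
    using compact_L1_operator_close_pair[where f=f, OF K f(1) _ e] f(2) by auto
  define h where "h = (\<lambda>x. (1/2) * (f n x - f m x))"
  have h: "integrable M h" "L1norm M h = 1"
  proof -
    show "integrable M h" using f(1) by (simp add: h_def)
    have "f n x = 0 \<or> f m x = 0" for x
      using A(3) nm(1) by (auto simp: f_def disjoint_family_on_def indicator_def)
    then show "L1norm M h = 1"
      unfolding h_def L1norm_cmult using L1norm_diff_disjoint_support[OF f(1) f(1)] f(2) by simp
  qed
  have "integrable M (\<lambda>x. f n x - f m x)" using f(1) by simp
  from L1_operator_cmult_AE[OF KL this, of "1/2"] L1_operator_diff_AE[OF KL f(1)[of n] f(1)[of m]]
  have "AE x in M. K h x = (1/2) * (K (f n) x - K (f m) x)"
    unfolding h_def by eventually_elim simp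
  moreover have "K h \<in> borel_measurable M" "K (f k) \<in> borel_measurable M" for k
    using L1_operator_integrable[OF KL] f(1) h(1) by auto
  ultimately have "L1norm M (K h) = L1norm M (\<lambda>x. (1/2) * (K (f n) x - K (f m) x))"
    by (intro L1norm_cong_AE) auto
  with nm(2) have Kh: "L1norm M (K h) < e" unfolding L1norm_cmult by simp
  have "AE x in M. h x \<noteq> 0 \<longrightarrow> c \<le> \<bar>u x\<bar>"
    using ge[of n] ge[of m] by eventually_elim (auto simp: h_def f_def)
  then have "c \<le> L1norm M (\<lambda>x. u x * h x)"
    using L1norm_mult_ge[OF h(1) integrable_mult_bounded[OF u bound h(1)]] h(2) by simp
  also have "\<dots> \<le> L1norm M (\<lambda>x. mult_op u h x + K h x) + L1norm M (K h)"
    using L1_operator_integrable[OF T h(1)] L1_operator_integrable[OF KL h(1)]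
      L1norm_diff_le[of M "\<lambda>x. mult_op u h x + K h x" "K h"]
    by (simp add: mult_op_def)
  also have "\<dots> < L1_opnorm M (\<lambda>f x. mult_op u f x + K f x) + e"
    using L1norm_le_L1_opnorm[OF T h(1)] h(2) Kh by simp
  finally show "c \<le> L1_opnorm M (\<lambda>f x. mult_op u f x + K f x) + e" by simp
qed

lemma Linf_norm_on_le_L1_opnorm:
  fixes u :: "'a \<Rightarrow> real"
  assumes sf: "sigma_finite_measure M" and D: "D \<in> sets M" and dif: "diffuse_on M D"
    and u: "u \<in> borel_measurable M" and bound: "AE x in M. \<bar>u x\<bar> \<le> C"
    and K: "compact_L1_operator M K"
  shows "Linf_norm_on M D u \<le> ereal (L1_opnorm M (\<lambda>f x. mult_op u f x + K f x))"
proof (rule ereal_le_real_posI)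
  show "0 \<le> L1_opnorm M (\<lambda>f x. mult_op u f x + K f x)"
    using K by (intro L1_opnorm_nonneg L1_operator_add[OF L1_operator_mult_op[OF u bound]])
      (simp add: compact_L1_operator_iff)
  fix c assume c: "0 < c" "ereal c < Linf_norm_on M D u"
  define S where "S = {x \<in> space M. x \<in> D \<and> c < \<bar>u x\<bar>}"
  have S_sets: "S \<in> sets M" unfolding S_def using D u by measurable
  have "0 < emeasure M S"
  proof (rule ccontr)
    assume "\<not> 0 < emeasure M S"
    then have "AE x in M. x \<notin> S" using AE_iff_null_sets[OF S_sets] S_sets by (simp add: null_sets_def)
    then have "AE x in M. x \<in> D \<longrightarrow> \<bar>u x\<bar> \<le> c" by (auto simp: S_def not_less elim: AE_mp[OF AE_space])
    with Linf_norm_on_le_iff[OF D u, of c] c show False by auto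
  qed
  then obtain S' where S': "S' \<in> sets M" "S' \<subseteq> S" "0 < emeasure M S'" "emeasure M S' < \<infinity>"
    using sigma_finite_measure.exists_finite_positive_subset[OF sf S_sets] by blast
  have "S' \<subseteq> D" using S' by (auto simp: S_def)
  obtain A :: "nat \<Rightarrow> 'a set" where A: "disjoint_family A" "\<And>n. A n \<in> sets M"
    "\<And>n. A n \<subseteq> S'" "\<And>n. 0 < emeasure M (A n)"
    using diffuse_on_disjoint_family[OF dif S'(1) \<open>S' \<subseteq> D\<close> S'(3)] by blast
  have "emeasure M (A n) < \<infinity>" for n
    using emeasure_mono[OF A(3) S'(1), of n] S'(4) by simp
  then have "0 < measure M (A n)" for n using A(4) by (simp add: measure_pos_iff)
  moreover have "AE x in M. x \<in> A n \<longrightarrow> c \<le> \<bar>u x\<bar>" for n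
    using A(3)[of n] S'(2) by (intro AE_I2) (auto simp: S_def)
  ultimately show "c \<le> L1_opnorm M (\<lambda>f x. mult_op u f x + K f x)"
    using L1_opnorm_mult_op_add_compact_ge[OF u bound A(2) _ A(1) _ K] by blast
qed

lemma limsup_atom_val_le_L1_opnorm:
  fixes u :: "'a \<Rightarrow> real" and B :: "nat \<Rightarrow> 'a set"
  assumes at: "\<And>n. is_atom M (B n)" and fin: "\<And>n. emeasure M (B n) < \<infinity>" and disj: "disjoint_family B"
    and u: "u \<in> borel_measurable M" and bound: "AE x in M. \<bar>u x\<bar> \<le> C"
    and K: "compact_L1_operator M K"
  shows "limsup (\<lambda>n. ereal \<bar>atom_val M u (B n)\<bar>) \<le> ereal (L1_opnorm M (\<lambda>f x. mult_op u f x + K f x))"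
proof (rule ereal_le_real_posI)
  show "0 \<le> L1_opnorm M (\<lambda>f x. mult_op u f x + K f x)"
    using K by (intro L1_opnorm_nonneg L1_operator_add[OF L1_operator_mult_op[OF u bound]])
      (simp add: compact_L1_operator_iff)
  define v where "v n = atom_val M u (B n)" for n
  fix c assume c: "0 < c" "ereal c < limsup (\<lambda>n. ereal \<bar>atom_val M u (B n)\<bar>)"
  have "infinite {n. c < \<bar>v n\<bar>}"
  proof
    assume "finite {n. c < \<bar>v n\<bar>}"
    then have "\<forall>\<^sub>F n in sequentially. ereal \<bar>v n\<bar> \<le> ereal c"
      by (auto simp: cofinite_eq_sequentially[symmetric] eventually_cofinite not_le)
    then have "limsup (\<lambda>n. ereal \<bar>v n\<bar>) \<le> ereal c" by (rule Limsup_bounded)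
    with c show False by (simp add: v_def)
  qed
  then obtain r :: "nat \<Rightarrow> nat" where r: "strict_mono r" "\<And>k. c < \<bar>v (r k)\<bar>"
    using infinite_enumerate by blast
  have "B (r k) \<in> sets M" for k using at by (simp add: is_atom_def)
  moreover have "0 < measure M (B (r k))" for k
    using r(2)[of k] c fin[of "r k"] by (auto simp: measure_pos_iff v_def atom_val_def zero_less_iff_neq_zero)
  moreover have "disjoint_family (\<lambda>k. B (r k))"
    unfolding disjoint_family_on_def
  proof (intro ballI impI)
    fix m n :: nat assume "m \<noteq> n"
    then have "r m \<noteq> r n" using strict_mono_eq[OF r(1)] by simp
    with disj show "B (r m) \<inter> B (r n) = {}" unfolding disjoint_family_on_def by blast
  qed
  moreover have "AE x in M. x \<in> B (r k) \<longrightarrow> c \<le> \<bar>u x\<bar>" for k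
    using AE_eq_atom_val[OF at fin u, of "r k"] r(2)[of k] by (auto simp: v_def elim: eventually_mono)
  ultimately show "c \<le> L1_opnorm M (\<lambda>f x. mult_op u f x + K f x)"
    by (rule L1_opnorm_mult_op_add_compact_ge[OF u bound _ _ _ _ K])
qed

lemma exists_compact_L1_opnorm_mult_op_add_le:
  fixes u :: "'a \<Rightarrow> real" and B :: "nat \<Rightarrow> 'a set"
  assumes D: "D \<in> sets M" and cover: "space M \<subseteq> D \<union> (\<Union>n. B n)"
    and at: "\<And>n. is_atom M (B n)" and fin: "\<And>n. emeasure M (B n) < \<infinity>" and disj: "disjoint_family B"
    and u[measurable]: "u \<in> borel_measurable M" and bound: "AE x in M. \<bar>u x\<bar> \<le> C"
    and diffuse_less: "Linf_norm_on M D u < ereal s"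
    and atoms_less: "limsup (\<lambda>n. ereal \<bar>atom_val M u (B n)\<bar>) < ereal s"
  shows "\<exists>K. compact_L1_operator M K \<and> L1_opnorm M (\<lambda>f x. mult_op u f x + K f x) \<le> s"
proof -
  have s: "0 \<le> s" using diffuse_less by (simp add: Linf_norm_on_def)
  have on_D: "AE x in M. x \<in> D \<longrightarrow> \<bar>u x\<bar> \<le> s"
    using Linf_norm_on_le_iff[OF D u s] less_imp_le[OF diffuse_less] by simp
  obtain N where N: "\<And>n. N \<le> n \<Longrightarrow> \<bar>atom_val M u (B n)\<bar> < s"
    using Limsup_lessD[OF atoms_less] by (auto simp: eventually_sequentially)
  have on_atoms: "AE x in M. \<forall>n. x \<in> B n \<longrightarrow> u x = atom_val M u (B n)"
    using AE_eq_atom_val[OF at fin u] by (subst AE_all_countable) auto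
  define F where "F = (\<Union>n<N. B n)"
  have [measurable]: "F \<in> sets M" using at by (auto simp: F_def is_atom_def)
  define K where "K = mult_op (\<lambda>x. indicator F x * - u x)"
  have "compact_L1_operator M K"
    unfolding K_def F_def using bound by (intro compact_L1_operator_mult_atoms[OF at fin disj]) auto
  moreover have "(\<lambda>f x. mult_op u f x + K f x) = mult_op (\<lambda>x. (1 - indicator F x) * u x)"
    by (simp add: fun_eq_iff K_def mult_op_def algebra_simps)
  moreover have "L1_opnorm M (mult_op (\<lambda>x. (1 - indicator F x) * u x)) \<le> s"
  proof (rule L1_opnorm_mult_op_le[OF _ _ s])
    show "AE x in M. \<bar>(1 - indicator F x) * u x\<bar> \<le> s"
      using on_D on_atoms AE_space
    proof eventually_elim
      case (elim x)
      show ?case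
      proof (cases "x \<in> F")
        case False
        from elim(3) cover consider "x \<in> D" | n where "x \<in> B n" by blast
        then show ?thesis
        proof cases
          case (2 n)
          with False have "N \<le> n" by (auto simp: F_def not_less)
          then have "\<bar>atom_val M u (B n)\<bar> < s" by (rule N)
          with 2 elim(2) False show ?thesis by simp
        qed (use elim(1) False in simp)
      qed (use s in simp)
    qed
  qed simp
  ultimately show ?thesis by metis
qed

theorem theorem2p1:
  fixes M :: "'a measure" and Dd Da :: "'a set" and B :: "nat \<Rightarrow> 'a set"
    and u :: "'a \<Rightarrow> real"
  assumes "sigma_finite_measure M"
    and "Dd \<in> sets M" and "Da \<in> sets M"
    and "Dd \<inter> Da = {}" and "Dd \<union> Da = space M"
    and "diffuse_on M Dd"
    and "Da = (\<Union>n. B n)" and "disjoint_family B" and "\<And>n. is_atom M (B n)"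
    and "u \<in> borel_measurable M" and "\<exists>C. AE x in M. \<bar>u x\<bar> \<le> C"
  shows "ereal (L1_essnorm M (mult_op u)) =
           max (Linf_norm_on M Dd u)
               (limsup (\<lambda>n. ereal \<bar>atom_val M u (B n)\<bar>))"
proof -
  obtain C where bound: "AE x in M. \<bar>u x\<bar> \<le> C" and C: "0 \<le> C"
    using assms(11) by (metis (mono_tags, lifting) eventually_mono max.cobounded1 max.coboundedI2)
  have fin: "emeasure M (B n) < \<infinity>" for n
    by (rule sigma_finite_measure.emeasure_atom_finite[OF assms(1,9)])
  let ?a = "Linf_norm_on M Dd u" and ?b = "limsup (\<lambda>n. ereal \<bar>atom_val M u (B n)\<bar>)"
  have "0 \<le> ?a" "?a \<le> ereal C"
    using Linf_norm_on_le_iff[OF assms(2,10) C] bound by (auto simp: Linf_norm_on_def elim: eventually_mono)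
  moreover have "?b \<le> ereal C"
    using abs_atom_val_le[OF assms(9) fin assms(10) bound C] by (intro Limsup_bounded) auto
  ultimately have finite: "\<bar>max ?a ?b\<bar> \<noteq> \<infinity>" by (auto simp: max_def)
  show ?thesis
  proof (rule L1_essnorm_eqI[OF finite])
    fix K assume "compact_L1_operator M K"
    then show "max ?a ?b \<le> ereal (L1_opnorm M (\<lambda>f x. mult_op u f x + K f x))"
      using Linf_norm_on_le_L1_opnorm[OF assms(1,2,6,10) bound]
        limsup_atom_val_le_L1_opnorm[OF assms(9) fin assms(8,10) bound] by simp
  next
    fix s assume "max ?a ?b < ereal s"
    then show "\<exists>K. compact_L1_operator M K \<and> L1_opnorm M (\<lambda>f x. mult_op u f x + K f x) \<le> s"
      using exists_compact_L1_opnorm_mult_op_add_le[OF assms(2) _ assms(9) fin assms(8,10) bound]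
        assms(5,7) by auto
  qed
qed

end
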